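(* Let $a<b$ and let $f,g:[a,b]\to\mathbb{R}$ be continuous and differentiable (from the right) at $a$. For $a<x\le b$ write $I_f(a,x)=\frac{1}{x-a}\int_a^x f(t)\,\mathrm{d}t$ and similarly $I_g(a,x)$. If $$\bigl[f(a)\,I_g(a,b)-g(a)\,I_f(a,b)\bigr]\cdot\bigl[f'(a)\,I_g(a,b)-g'(a)\,I_f(a,b)\bigr]> 0,$$ then there exists $\eta\in(a,b)$ such that $$I_g(a,b)\bigl(f(\eta)-I_f(a,\eta)\bigr)=I_f(a,b)\bigl(g(\eta)-I_g(a,\eta)\bigr).$$ *)

theory Defs
  imports "HOL-Analysis.Analysis"
begin

definition int_mean :: "(real \<Rightarrow> real) \<Rightarrow> real \<Rightarrow> real \<Rightarrow> real" where
  "int_mean f a x = integral {a..x} f / (x - a)"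

end

theory Submission
  imports Defs
begin

text \<open>
  Put \<open>A = I\<^sub>f(a,b)\<close>, \<open>B = I\<^sub>g(a,b)\<close> and \<open>h = B f - A g\<close>. Then \<open>h\<close> has integral mean zero on
  \<open>[a,b]\<close>, the hypothesis says \<open>h(a) h'(a) > 0\<close>, and the claim is \<open>h(\<eta>) = I\<^sub>h(a,\<eta>)\<close>.
  Say \<open>h(a), h'(a) > 0\<close>. The mean \<open>\<phi>(x) = I\<^sub>h(a,x)\<close> tends to \<open>h(a)\<close> as \<open>x \<rightarrow> a\<^sup>+\<close>, exceeds \<open>h(a)\<close>
  somewhere because \<open>h\<close> is increasing at \<open>a\<close>, and \<open>\<phi>(b) = 0 < h(a)\<close>. Hence \<open>\<phi>\<close> has an interior
  maximum \<open>\<eta>\<close>, where \<open>0 = \<phi>'(\<eta>) = (h(\<eta>) - \<phi>(\<eta>)) / (\<eta> - a)\<close>.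
\<close>

lemma int_mean_diff_cmult:
  assumes "f integrable_on {a..x}" and "g integrable_on {a..x}"
  shows "int_mean (\<lambda>t. c * f t - d * g t) a x = c * int_mean f a x - d * int_mean g a x"
proof -
  have "(\<lambda>t. c * f t) integrable_on {a..x}" "(\<lambda>t. d * g t) integrable_on {a..x}"
    using integrable_on_cmult_left[OF assms(1), of c] integrable_on_cmult_left[OF assms(2), of d]
    by simp_all
  then have "integral {a..x} (\<lambda>t. c * f t - d * g t) = c * integral {a..x} f - d * integral {a..x} g"
    by (simp add: integral_diff)
  then show ?thesis
    by (simp add: int_mean_def diff_divide_distrib)
qed

lemma int_mean_minus: "int_mean (\<lambda>t. - h t) a x = - int_mean h a x"
  by (simp add: int_mean_def integral_neg)
lemma int_mean_tendsto_at_right: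
  assumes "a < b" and "continuous_on {a..b} h"
  shows "(int_mean h a \<longlongrightarrow> h a) (at_right a)"
proof -
  have "((\<lambda>x. integral {a..x} h) has_real_derivative h a) (at a within {a..b})"
    using integral_has_real_derivative[OF assms(2)] assms(1) by simp
  then have "((\<lambda>x. (integral {a..x} h - integral {a..a} h) / (x - a)) \<longlongrightarrow> h a) (at_right a)"
    unfolding has_field_derivative_iff at_within_Icc_at_right[OF assms(1)] .
  then show ?thesis
    by (simp add: int_mean_def[abs_def])
qed

lemma continuous_on_int_mean:
  assumes "a < c" and "continuous_on {a..b} h"
  shows "continuous_on {c..b} (int_mean h a)"
proof -
  have "continuous_on {a..b} (\<lambda>x. integral {a..x} h)"
    using assms(2) by (intro indefinite_integral_continuous_1 integrable_continuous_interval)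
  then show ?thesis
    unfolding int_mean_def[abs_def] using assms(1)
    by (intro continuous_intros) (auto elim: continuous_on_subset)
qed

lemma int_mean_has_real_derivative:
  assumes "continuous_on {a..b} h" and "a < x" and "x < b"
  shows "(int_mean h a has_real_derivative (h x - int_mean h a x) / (x - a)) (at x)"
proof -
  have "((\<lambda>y. integral {a..y} h) has_real_derivative h x) (at x)"
    using integral_has_real_derivative[OF assms(1), of x] assms at_within_Icc_at[of a x b] by simp
  moreover have "((\<lambda>y. y - a) has_real_derivative 1) (at x)"
    by (auto intro!: derivative_eq_intros)
  ultimately have "(int_mean h a has_real_derivative
      (h x * (x - a) - integral {a..x} h * 1) / ((x - a) * (x - a))) (at x)"
    unfolding int_mean_def[abs_def] using assms(2) by (intro DERIV_divide) auto
  then show ?thesis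
    using assms(2) by (simp add: int_mean_def diff_divide_distrib)
qed

lemma int_mean_exceeds_initial_value:
  assumes "a < b" and "continuous_on {a..b} h"
    and "(h has_real_derivative h') (at a within {a..b})" and "h' > 0"
  shows "\<exists>x. a < x \<and> x < b \<and> h a < int_mean h a x"
proof -
  \<comment> \<open>Near \<open>a\<close> the function lies above the line through \<open>(a, h a)\<close> of half the slope.\<close>
  have "((\<lambda>t. h t - h'/2 * (t - a)) has_real_derivative h' - h'/2) (at a within {a..b})"
    using assms(3) by (auto intro!: derivative_eq_intros)
  from has_real_derivative_pos_inc_right[OF this] obtain d where "d > 0" and
    d: "\<And>k. k > 0 \<Longrightarrow> a + k \<in> {a..b} \<Longrightarrow> k < d \<Longrightarrow> h a < h (a + k) - h'/2 * k"
    using assms(4) by auto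
  define x where "x = a + min d (b - a) / 2"
  have x: "a < x" "x < b" "x - a < d"
    using \<open>d > 0\<close> assms(1) by (auto simp: x_def min_def field_simps)
  have above_line: "h a + h'/2 * (t - a) \<le> h t" if "t \<in> {a..x}" for t
  proof (cases "t = a")
    case False
    then show ?thesis
      using d[of "t - a"] that x by simp
  qed simp
  have line_integral: "((\<lambda>t. h a + h'/2 * (t - a)) has_integral
      (h a * (x - a) + h'/4 * (x - a)^2) - (h a * (a - a) + h'/4 * (a - a)^2)) {a..x}"
  proof (rule fundamental_theorem_of_calculus)
    fix t
    have "((\<lambda>t. h a * (t - a) + h'/4 * (t - a)^2) has_real_derivative
        h a + h'/2 * (t - a)) (at t within {a..x})"
      by (auto intro!: derivative_eq_intros simp: field_simps)
    then show "((\<lambda>t. h a * (t - a) + h'/4 * (t - a)^2) has_vector_derivative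
        h a + h'/2 * (t - a)) (at t within {a..x})"
      by (simp add: has_real_derivative_iff_has_vector_derivative[symmetric])
  qed (use x in simp)
  have h_integral: "(h has_integral integral {a..x} h) {a..x}"
    using assms(2) x by (intro integrable_integral integrable_continuous_interval)
      (auto elim: continuous_on_subset)
  have "h a * (x - a) + h'/4 * (x - a)^2 \<le> integral {a..x} h"
    using has_integral_le[OF line_integral h_integral above_line] by simp
  moreover have "h'/4 * (x - a)^2 > 0"
    using assms(4) x by simp
  ultimately have "h a < int_mean h a x"
    using x by (simp add: int_mean_def field_simps)
  with x show ?thesis by blast
qed

lemma exists_eq_int_mean_pos:
  assumes "a < b" and cont: "continuous_on {a..b} h"
    and "(h has_real_derivative h') (at a within {a..b})" and "h' > 0"
    and end_mean: "int_mean h a b \<le> h a"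
  shows "\<exists>\<eta>. a < \<eta> \<and> \<eta> < b \<and> h \<eta> = int_mean h a \<eta>"
proof -
  obtain x where x: "a < x" "x < b" "h a < int_mean h a x"
    using int_mean_exceeds_initial_value assms by blast
  have "\<forall>\<^sub>F y in at_right a. int_mean h a y < int_mean h a x"
    using order_tendstoD(2)[OF int_mean_tendsto_at_right[OF assms(1) cont] x(3)] .
  then obtain e where "e > a" and e: "\<And>y. a < y \<Longrightarrow> y < e \<Longrightarrow> int_mean h a y < int_mean h a x"
    unfolding eventually_at_right_field by blast
  define c where "c = (a + min e x) / 2"
  have c: "a < c" "c < x" "int_mean h a c < int_mean h a x"
    using \<open>e > a\<close> x(1) e[of c] by (auto simp: c_def min_def)
  obtain \<eta> where \<eta>: "c \<le> \<eta>" "\<eta> \<le> b"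
    and max: "\<And>y. y \<in> {c..b} \<Longrightarrow> int_mean h a y \<le> int_mean h a \<eta>"
    using continuous_attains_sup[OF _ _ continuous_on_int_mean[OF c(1) cont]] c x by auto
  have "int_mean h a x \<le> int_mean h a \<eta>"
    using max c x by simp
  with c(3) x(3) end_mean have "\<eta> \<noteq> c" "\<eta> \<noteq> b"
    by auto
  with \<eta> have interior: "c < \<eta>" "\<eta> < b"
    by simp_all
  have "(h \<eta> - int_mean h a \<eta>) / (\<eta> - a) = 0"
  proof (rule DERIV_local_max)
    show "(int_mean h a has_real_derivative (h \<eta> - int_mean h a \<eta>) / (\<eta> - a)) (at \<eta>)"
      using int_mean_has_real_derivative[OF cont] interior c by simp
    show "0 < min (\<eta> - c) (b - \<eta>)"
      using interior by simp
    show "\<forall>y. \<bar>\<eta> - y\<bar> < min (\<eta> - c) (b - \<eta>) \<longrightarrow> int_mean h a y \<le> int_mean h a \<eta>"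
      by (auto intro!: max simp: abs_less_iff)
  qed
  then have "h \<eta> = int_mean h a \<eta>"
    using interior c by simp
  moreover have "a < \<eta>"
    using interior c by simp
  ultimately show ?thesis
    using interior by blast
qed

lemma exists_eq_int_mean:
  assumes "a < b" and "continuous_on {a..b} h"
    and "(h has_real_derivative h') (at a within {a..b})"
    and "(h a - int_mean h a b) * h' > 0"
  shows "\<exists>\<eta>. a < \<eta> \<and> \<eta> < b \<and> h \<eta> = int_mean h a \<eta>"
proof (cases "h' > 0")
  case True
  then show ?thesis
    using exists_eq_int_mean_pos assms by (simp add: zero_less_mult_iff)
next
  case False
  have "\<exists>\<eta>. a < \<eta> \<and> \<eta> < b \<and> - h \<eta> = int_mean (\<lambda>t. - h t) a \<eta>"
    using False assms
    by (intro exists_eq_int_mean_pos[where h' = "- h'"])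
      (auto intro: continuous_intros DERIV_minus simp: int_mean_minus zero_less_mult_iff)
  then show ?thesis
    by (simp add: int_mean_minus)
qed

theorem mainTheorem12:
  fixes f g :: "real \<Rightarrow> real" and a b f' g' :: real
  assumes "a < b"
    and "continuous_on {a..b} f" and "continuous_on {a..b} g"
    and "(f has_real_derivative f') (at a within {a..b})"
    and "(g has_real_derivative g') (at a within {a..b})"
    and "(f a * int_mean g a b - g a * int_mean f a b) *
         (f' * int_mean g a b - g' * int_mean f a b) > 0"
  shows "\<exists>\<eta>. a < \<eta> \<and> \<eta> < b \<and>
    int_mean g a b * (f \<eta> - int_mean f a \<eta>) = int_mean f a b * (g \<eta> - int_mean g a \<eta>)"
proof -
  define A B where "A = int_mean f a b" and "B = int_mean g a b"
  define h where "h t = B * f t - A * g t" for t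
  have mean_h: "int_mean h a x = B * int_mean f a x - A * int_mean g a x" if "x \<le> b" for x
    unfolding h_def using assms(2,3) that
    by (intro int_mean_diff_cmult integrable_continuous_interval) (auto elim: continuous_on_subset)
  have "\<exists>\<eta>. a < \<eta> \<and> \<eta> < b \<and> h \<eta> = int_mean h a \<eta>"
  proof (rule exists_eq_int_mean)
    show "continuous_on {a..b} h"
      unfolding h_def using assms(2,3) by (intro continuous_intros)
    show "(h has_real_derivative B * f' - A * g') (at a within {a..b})"
      unfolding h_def[abs_def] using assms(4,5) by (intro DERIV_diff DERIV_cmult)
    show "(h a - int_mean h a b) * (B * f' - A * g') > 0"
      using assms(6) mean_h[of b] by (simp add: h_def A_def B_def algebra_simps)
  qed fact
  then show ?thesis
    using mean_h by (auto simp: h_def A_def B_def algebra_simps)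
qed

end
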